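(* In the setting described in the context: (a) if $S(i)=S(i+1)$ for every $i\in E$ (the signal is constant on each $A_i$), then $\sum_{z=0}^{N/2-1}|(W\lambda)(z)|^2\ge1-\frac{2M}{N}$; (b) if $S(i)\ne S(i+1)$ for every $i\in E$ (the signal is balanced on each $A_i$), then $\sum_{z=N/2}^{N-1}|(W\lambda)(z)|^2\ge1-\frac{2M}{N}$. The same two conclusions hold with $W$ replaced by $W_1$.
   Context: Let $N=2^n$, $n\ge1$, and $M\ge1$ with $2M<N$. Let $E\subset\{0,\dots,N-1\}$ be a set of $M$ even labels, $A_i=\{i,i+1\}$ for $i\in E$, and $A=\bigcup_{i\in E}A_i$ (so $|A|=2M$). Let $S:\{0,\dots,N-1\}\to\{0,1\}$ be arbitrary (its values outside $A$ are unrestricted). Let $\theta\in(0,\pi/2)$ with $\sin\theta=\sqrt{2M/N}$, $k=\lfloor\pi/(4\theta)\rfloor$, $a_k=\frac{\sin((2k+1)\theta)}{\sqrt{2M}}$, $b_k=\frac{\cos((2k+1)\theta)}{\sqrt{N-2M}}$, and $\lambda(z)=a_k(-1)^{S(z)}$ for $z\in A$, $\lambda(z)=b_k(-1)^{S(z)}$ for $z\notin A$. Haar wavelet transform: for $k=1,\dots,n$ let $m=n-k+1$ and let $H_k$ be the $2^m\times2^m$ matrix with, for $0\le j<2^{m-1}$, $(H_k)_{j,2j}=(H_k)_{j,2j+1}=\frac1{\sqrt2}$, $(H_k)_{2^{m-1}+j,2j}=\frac1{\sqrt2}$, $(H_k)_{2^{m-1}+j,2j+1}=-\frac1{\sqrt2}$,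 all other entries $0$; let $W_k=\begin{pmatrix}H_k&0\\0&I_{2^n-2^m}\end{pmatrix}$ and $W=W_nW_{n-1}\cdots W_1$. *)

theory Defs
  imports Complex_Main
begin

text \<open>Vectors of length N are functions nat => real (only indices < N matter);
  matrices are functions nat => nat => real with explicit size.\<close>

definition matvec :: "nat \<Rightarrow> (nat \<Rightarrow> nat \<Rightarrow> real) \<Rightarrow> (nat \<Rightarrow> real) \<Rightarrow> nat \<Rightarrow> real" where
  "matvec d Mt v = (\<lambda>i. \<Sum>j<d. Mt i j * v j)"

definition haarH :: "nat \<Rightarrow> nat \<Rightarrow> nat \<Rightarrow> nat \<Rightarrow> real" where
  "haarH n k r c =
     (let m = n - k + 1; h = (2::nat) ^ (m - 1) in
      if r < h \<and> (c = 2 * r \<or> c = 2 * r + 1) then 1 / sqrt 2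
      else if h \<le> r \<and> r < 2 * h \<and> c = 2 * (r - h) then 1 / sqrt 2
      else if h \<le> r \<and> r < 2 * h \<and> c = 2 * (r - h) + 1 then - (1 / sqrt 2)
      else 0)"

definition haarW :: "nat \<Rightarrow> nat \<Rightarrow> nat \<Rightarrow> nat \<Rightarrow> real" where
  "haarW n k r c =
     (let m = n - k + 1 in
      if r < 2 ^ m \<and> c < 2 ^ m then haarH n k r c
      else if r < 2 ^ m \<or> c < 2 ^ m then 0
      else if r = c then 1 else 0)"

fun haar_partial :: "nat \<Rightarrow> nat \<Rightarrow> (nat \<Rightarrow> real) \<Rightarrow> nat \<Rightarrow> real" where
  "haar_partial n 0 v = v"
| "haar_partial n (Suc j) v = matvec (2 ^ n) (haarW n (Suc j)) (haar_partial n j v)"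

definition haar_transform :: "nat \<Rightarrow> (nat \<Rightarrow> real) \<Rightarrow> nat \<Rightarrow> real" where
  "haar_transform n v = haar_partial n n v"

definition pairs_set :: "nat set \<Rightarrow> nat set" where
  "pairs_set E = (\<Union>i\<in>E. {i, i + 1})"

definition grover_lambda :: "nat \<Rightarrow> nat \<Rightarrow> real \<Rightarrow> nat set \<Rightarrow> (nat \<Rightarrow> nat) \<Rightarrow> nat \<Rightarrow> real" where
  "grover_lambda N M \<theta> E S z =
     (let k = \<lfloor>pi / (4 * \<theta>)\<rfloor>;
          a = sin ((2 * of_int k + 1) * \<theta>) / sqrt (2 * real M);
          b = cos ((2 * of_int k + 1) * \<theta>) / sqrt (real N - 2 * real M)
      in (if z \<in> pairs_set E then a else b) * (-1) ^ S z)"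

end

theory Submission imports Defs begin

text \<open>
  Every W_k with k \<ge> 2 only mixes coordinates in the low half \<open>{0..<N/2}\<close> by an orthogonal
  butterfly and fixes the high half, so the energies of the two halves of W \<lambda> are those of
  W_1 \<lambda>. Each pair \<open>A_i\<close> is mapped by W_1 onto the low coordinate \<open>i/2\<close> and the high coordinate
  \<open>N/2 + i/2\<close>: if the signal is constant on \<open>A_i\<close> the whole energy \<open>2 a_k\<^sup>2\<close> of the pair lands in
  the low coordinate, if it is balanced, in the high one. Summing over the \<open>M\<close> pairs gives
  \<open>sin\<^sup>2((2k+1)\<theta>)\<close>, and the choice of \<open>k\<close> puts \<open>(2k+1)\<theta>\<close> within \<open>\<theta>\<close> of \<open>\<pi>/2\<close>, so this is at
  least \<open>1 - sin\<^sup>2 \<theta> = 1 - 2M/N\<close>.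
\<close>

lemma sum_lessThan_split_ivl:
  fixes f :: "nat \<Rightarrow> 'a::comm_monoid_add"
  assumes "a \<le> b"
  shows "(\<Sum>r<b. f r) = (\<Sum>r<a. f r) + (\<Sum>r\<in>{a..<b}. f r)"
  using sum.atLeastLessThan_concat[of 0 a b f] assms by (simp add: atLeast0LessThan)

lemma sum_lessThan_double_halves:
  fixes g :: "nat \<Rightarrow> 'a::comm_monoid_add"
  shows "(\<Sum>r<2*h. g r) = (\<Sum>r<h. g r + g (h + r))"
proof -
  have "(\<Sum>r<2*h. g r) = (\<Sum>r<h. g r) + (\<Sum>r\<in>{h..<2*h}. g r)"
    by (rule sum_lessThan_split_ivl) simp
  also have "(\<Sum>r\<in>{h..<2*h}. g r) = (\<Sum>r\<in>{0..<h}. g (r + h))"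
    using sum.shift_bounds_nat_ivl[of g 0 h h] by (simp add: mult_2)
  finally show ?thesis by (simp add: atLeast0LessThan add.commute sum.distrib)
qed

lemma sum_lessThan_double_even_odd:
  fixes f :: "nat \<Rightarrow> 'a::comm_monoid_add"
  shows "(\<Sum>c<2*h. f c) = (\<Sum>r<h. f (2*r) + f (2*r+1))"
  by (induction h) (simp_all add: ac_simps)

lemma butterfly_energy:
  fixes P Q :: "nat \<Rightarrow> real"
  assumes "\<And>r. r < h \<Longrightarrow> Q r = (P (2*r) + P (2*r+1)) / sqrt 2"
    and "\<And>r. r < h \<Longrightarrow> Q (h + r) = (P (2*r) - P (2*r+1)) / sqrt 2"
  shows "(\<Sum>r<2*h. Q r ^ 2) = (\<Sum>c<2*h. P c ^ 2)"
proof -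
  have "Q r ^ 2 + Q (h + r) ^ 2 = P (2*r) ^ 2 + P (2*r+1) ^ 2" if "r < h" for r
  proof -
    have "Q r ^ 2 + Q (h + r) ^ 2 = ((P (2*r) + P (2*r+1))^2 + (P (2*r) - P (2*r+1))^2) / 2"
      using assms[OF that] by (simp add: power_divide)
    also have "\<dots> = P (2*r) ^ 2 + P (2*r+1) ^ 2"
      by (simp add: power2_eq_square algebra_simps)
    finally show ?thesis .
  qed
  then have "(\<Sum>r<h. Q r ^ 2 + Q (h + r) ^ 2) = (\<Sum>r<h. P (2*r) ^ 2 + P (2*r+1) ^ 2)"
    by (intro sum.cong) auto
  then show ?thesis
    using sum_lessThan_double_halves[of "\<lambda>r. Q r ^ 2" h]
      sum_lessThan_double_even_odd[of "\<lambda>c. P c ^ 2" h] by simp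
qed

lemma two_pow_Suc_diff_le:
  assumes "1 \<le> k" "k \<le> n"
  shows "2 * (2::nat) ^ (n - k) \<le> 2 ^ n"
proof -
  have "(2::nat) ^ Suc (n - k) \<le> 2 ^ n" by (rule power_increasing) (use assms in auto)
  then show ?thesis by simp
qed

lemma matvec_haarW_sum_row:
  assumes "1 \<le> k" "k \<le> n" "r < 2 ^ (n - k)"
  shows "matvec (2^n) (haarW n k) v r = (v (2*r) + v (2*r+1)) / sqrt 2"
proof -
  note size = two_pow_Suc_diff_le[OF assms(1,2)]
  have "haarW n k r c * v c =
      (if c = 2*r then v c / sqrt 2 else 0) + (if c = 2*r+1 then v c / sqrt 2 else 0)"
    if "c < 2^n" for c
    using assms(3) size that by (auto simp: haarW_def haarH_def Let_def)
  then have "matvec (2^n) (haarW n k) v r = (\<Sum>c<2^n.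
      (if c = 2*r then v c / sqrt 2 else 0) + (if c = 2*r+1 then v c / sqrt 2 else 0))"
    unfolding matvec_def by (intro sum.cong) auto
  also have "\<dots> = (v (2*r) + v (2*r+1)) / sqrt 2"
    using assms(3) size by (simp add: sum.distrib add_divide_distrib)
  finally show ?thesis .
qed

lemma matvec_haarW_diff_row:
  assumes "1 \<le> k" "k \<le> n" "r < 2 ^ (n - k)"
  shows "matvec (2^n) (haarW n k) v (2 ^ (n - k) + r) = (v (2*r) - v (2*r+1)) / sqrt 2"
proof -
  note size = two_pow_Suc_diff_le[OF assms(1,2)]
  have "haarW n k (2 ^ (n - k) + r) c * v c =
      (if c = 2*r then v c / sqrt 2 else 0) - (if c = 2*r+1 then v c / sqrt 2 else 0)"
    if "c < 2^n" for c
    using assms(3) size that by (auto simp: haarW_def haarH_def Let_def)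
  then have "matvec (2^n) (haarW n k) v (2 ^ (n - k) + r) = (\<Sum>c<2^n.
      (if c = 2*r then v c / sqrt 2 else 0) - (if c = 2*r+1 then v c / sqrt 2 else 0))"
    unfolding matvec_def by (intro sum.cong) auto
  also have "\<dots> = (v (2*r) - v (2*r+1)) / sqrt 2"
    using assms(3) size by (simp add: sum_subtractf diff_divide_distrib)
  finally show ?thesis .
qed

lemma matvec_haarW_identity_row:
  assumes "1 \<le> k" "k \<le> n" "2 * 2 ^ (n - k) \<le> r" "r < 2 ^ n"
  shows "matvec (2^n) (haarW n k) v r = v r"
proof -
  have "haarW n k r c * v c = (if c = r then v c else 0)" if "c < 2^n" for c
    using assms(1-3) that by (auto simp: haarW_def haarH_def Let_def)
  then have "matvec (2^n) (haarW n k) v r = (\<Sum>c<2^n. if c = r then v c else 0)"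
    unfolding matvec_def by (intro sum.cong) auto
  also have "\<dots> = v r" using assms(4) by simp
  finally show ?thesis .
qed

lemma matvec_haarW_low_half_energy:
  assumes "2 \<le> k" "k \<le> n"
  shows "(\<Sum>r<2^(n-1). (matvec (2^n) (haarW n k) v r)^2) = (\<Sum>r<2^(n-1). (v r)^2)"
proof -
  let ?Q = "matvec (2^n) (haarW n k) v" and ?h = "(2::nat) ^ (n - k)"
  have k: "1 \<le> k" using assms(1) by simp
  have block: "2 * ?h \<le> 2 ^ (n-1)"
    using two_pow_Suc_diff_le[of "k - 1" "n - 1"] assms by (simp add: diff_diff_add)
  have "(\<Sum>r<2^(n-1). ?Q r ^ 2) = (\<Sum>r<2 * ?h. ?Q r ^ 2) + (\<Sum>r\<in>{2 * ?h..<2^(n-1)}. ?Q r ^ 2)"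
    by (rule sum_lessThan_split_ivl[OF block])
  also have "(\<Sum>r<2 * ?h. ?Q r ^ 2) = (\<Sum>r<2 * ?h. v r ^ 2)"
    by (rule butterfly_energy)
      (simp_all add: matvec_haarW_sum_row[OF k assms(2)] matvec_haarW_diff_row[OF k assms(2)])
  also have "(\<Sum>r\<in>{2 * ?h..<2^(n-1)}. ?Q r ^ 2) = (\<Sum>r\<in>{2 * ?h..<2^(n-1)}. v r ^ 2)"
  proof (intro sum.cong refl)
    fix r assume r: "r \<in> {2 * ?h..<2^(n-1)}"
    have "(2::nat) ^ (n-1) \<le> 2 ^ n" by (rule power_increasing) auto
    with r have "r < 2 ^ n" by (meson atLeastLessThan_iff less_le_trans)
    with r show "?Q r ^ 2 = v r ^ 2"
      using matvec_haarW_identity_row[OF k assms(2)] by simp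
  qed
  also have "(\<Sum>r<2 * ?h. v r ^ 2) + (\<Sum>r\<in>{2 * ?h..<2^(n-1)}. v r ^ 2)
      = (\<Sum>r<2^(n-1). v r ^ 2)"
    by (rule sum_lessThan_split_ivl[OF block, symmetric])
  finally show ?thesis .
qed

lemma haar_partial_high_half:
  assumes "1 \<le> j" "j \<le> n" "2^(n-1) \<le> r" "r < 2^n"
  shows "haar_partial n j v r = haar_partial n 1 v r"
  using assms(1,2)
proof (induction j rule: dec_induct)
  case (step j)
  have "2 * 2 ^ (n - Suc j) \<le> (2::nat) ^ (n-1)"
    using two_pow_Suc_diff_le[of j "n - 1"] step by (simp add: diff_diff_add)
  then have "haar_partial n (Suc j) v r = haar_partial n j v r"
    using matvec_haarW_identity_row[of "Suc j" n r] step assms(3,4) by simp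
  with step show ?case by simp
qed simp

lemma haar_partial_low_half_energy:
  assumes "1 \<le> j" "j \<le> n"
  shows "(\<Sum>r<2^(n-1). (haar_partial n j v r)^2) = (\<Sum>r<2^(n-1). (haar_partial n 1 v r)^2)"
  using assms
proof (induction j rule: dec_induct)
  case (step j)
  then show ?case using matvec_haarW_low_half_energy[of "Suc j" n] by simp
qed simp

lemma sum_halved_evens_le:
  fixes g :: "nat \<Rightarrow> real"
  assumes "E \<subseteq> {..<2*h}" "\<forall>i\<in>E. even i" "\<And>z. 0 \<le> g z"
  shows "(\<Sum>i\<in>E. g (i div 2)) \<le> (\<Sum>z<h. g z)"
proof -
  have "inj_on (\<lambda>i. i div 2) E"
    using assms(2) by (intro inj_onI) (metis dvd_mult_div_cancel)
  then have "(\<Sum>i\<in>E. g (i div 2)) = (\<Sum>z\<in>(\<lambda>i. i div 2) ` E. g z)"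
    by (simp add: sum.reindex)
  also have "\<dots> \<le> (\<Sum>z<h. g z)"
    by (rule sum_mono2) (use assms in auto)
  finally show ?thesis .
qed

lemma matvec_haarW_first_pair_energy:
  assumes "1 \<le> n" "E \<subseteq> {..<2^n}" "\<forall>i\<in>E. even i"
  shows "(\<Sum>i\<in>E. (v i + v (i+1))^2 / 2)
           \<le> (\<Sum>z<2^(n-1). (matvec (2^n) (haarW n 1) v z)^2)"
    and "(\<Sum>i\<in>E. (v i - v (i+1))^2 / 2)
           \<le> (\<Sum>z\<in>{2^(n-1)..<2^n}. (matvec (2^n) (haarW n 1) v z)^2)"
proof -
  define h :: nat where "h = 2^(n-1)"
  define u where "u = matvec (2^n) (haarW n 1) v"
  have N: "2^n = 2 * h" unfolding h_def using assms(1) by (cases n) auto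
  have E: "E \<subseteq> {..<2*h}" using assms(2) N by simp
  have half: "2 * (i div 2) = i" "i div 2 < h" if "i \<in> E" for i
    using that assms(3) E by auto
  have "(v i + v (i+1))^2 / 2 = u (i div 2) ^ 2" if "i \<in> E" for i
    using matvec_haarW_sum_row[of 1 n "i div 2" v] half[OF that] assms(1)
    unfolding u_def h_def by (simp add: power_divide)
  then have "(\<Sum>i\<in>E. (v i + v (i+1))^2 / 2) = (\<Sum>i\<in>E. u (i div 2) ^ 2)"
    by simp
  also have "\<dots> \<le> (\<Sum>z<h. u z ^ 2)"
    by (rule sum_halved_evens_le[OF E assms(3)]) simp
  finally show "(\<Sum>i\<in>E. (v i + v (i+1))^2 / 2) \<le> (\<Sum>z<2^(n-1). u z ^ 2)"
    unfolding h_def .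
  have "(v i - v (i+1))^2 / 2 = u (h + i div 2) ^ 2" if "i \<in> E" for i
    using matvec_haarW_diff_row[of 1 n "i div 2" v] half[OF that] assms(1)
    unfolding u_def h_def by (simp add: power_divide)
  then have "(\<Sum>i\<in>E. (v i - v (i+1))^2 / 2) = (\<Sum>i\<in>E. u (h + i div 2) ^ 2)"
    by simp
  also have "\<dots> \<le> (\<Sum>z<h. u (h + z) ^ 2)"
    by (rule sum_halved_evens_le[OF E assms(3), of "\<lambda>z. u (h + z) ^ 2"]) simp
  also have "\<dots> = (\<Sum>z\<in>{h..<2*h}. u z ^ 2)"
    using sum.shift_bounds_nat_ivl[of "\<lambda>z. u z ^ 2" 0 h h]
    by (simp add: atLeast0LessThan mult_2 add.commute)
  finally show "(\<Sum>i\<in>E. (v i - v (i+1))^2 / 2) \<le> (\<Sum>z\<in>{2^(n-1)..<2^n}. u z ^ 2)"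
    unfolding N h_def .
qed

lemma grover_lambda_pair_energy:
  fixes N M :: nat and \<theta> :: real
  assumes "i \<in> E" "S i \<in> {0, 1}" "S (i + 1) \<in> {0, 1}"
  defines "lam \<equiv> grover_lambda N M \<theta> E S"
    and "a \<equiv> sin ((2 * of_int \<lfloor>pi / (4 * \<theta>)\<rfloor> + 1) * \<theta>) / sqrt (2 * real M)"
  shows "S i = S (i + 1) \<Longrightarrow> (lam i + lam (i + 1))^2 / 2 = 2 * a^2"
    and "S i \<noteq> S (i + 1) \<Longrightarrow> (lam i - lam (i + 1))^2 / 2 = 2 * a^2"
proof -
  have "i \<in> pairs_set E" "i + 1 \<in> pairs_set E"
    using assms(1) unfolding pairs_set_def by auto
  then have lam: "lam i = a * (-1) ^ S i" "lam (i + 1) = a * (-1) ^ S (i + 1)"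
    unfolding lam_def a_def grover_lambda_def Let_def by simp_all
  have sign: "((-1::real) ^ S i)^2 = 1" by (simp flip: power_mult power_mult_distrib)
  show "(lam i + lam (i + 1))^2 / 2 = 2 * a^2" if "S i = S (i + 1)"
    using that sign unfolding lam by (simp add: power_mult_distrib)
  show "(lam i - lam (i + 1))^2 / 2 = 2 * a^2" if "S i \<noteq> S (i + 1)"
  proof -
    have "(-1::real) ^ S (i + 1) = - ((-1) ^ S i)" using that assms(2,3) by auto
    then show ?thesis using sign unfolding lam by (simp add: power_mult_distrib)
  qed
qed

lemma cos_grover_angle_sq_le:
  fixes \<theta> :: real
  assumes "0 < \<theta>" "\<theta> < pi / 2"
  shows "cos ((2 * of_int \<lfloor>pi / (4 * \<theta>)\<rfloor> + 1) * \<theta>) ^ 2 \<le> sin \<theta> ^ 2"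
proof -
  define k where "k = \<lfloor>pi / (4 * \<theta>)\<rfloor>"
  have "of_int k \<le> pi / (4 * \<theta>)" "pi / (4 * \<theta>) < of_int k + 1"
    unfolding k_def by linarith+
  then have "of_int k * (4 * \<theta>) \<le> pi" "pi < (of_int k + 1) * (4 * \<theta>)"
    using assms(1) by (simp_all add: le_divide_eq divide_less_eq)
  moreover define t where "t = (2 * of_int k + 1) * \<theta> - pi / 2"
  ultimately have t: "t \<le> \<theta>" "- \<theta> < t" by (simp_all add: algebra_simps)
  have "cos ((2 * of_int k + 1) * \<theta>) = - sin t"
    unfolding t_def by (simp add: cos_diff sin_diff)
  moreover have "sin t \<le> sin \<theta>" "sin (-t) \<le> sin \<theta>"
    by (rule sin_monotone_2pi_le; use t assms in auto)+
  then have "\<bar>sin t\<bar> ^ 2 \<le> sin \<theta> ^ 2" by (intro power_mono) auto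
  ultimately show ?thesis unfolding k_def by simp
qed


lemma grover_pairs_energy_ge:
  fixes \<theta> :: real
  assumes "0 < \<theta>" "\<theta> < pi / 2" "sin \<theta> = sqrt (2 * real M / real N)" "1 \<le> M"
  shows "1 - 2 * real M / real N
    \<le> real M * (2 * (sin ((2 * of_int \<lfloor>pi / (4 * \<theta>)\<rfloor> + 1) * \<theta>) / sqrt (2 * real M))^2)"
proof -
  define x where "x = (2 * of_int \<lfloor>pi / (4 * \<theta>)\<rfloor> + 1) * \<theta>"
  have "cos x ^ 2 \<le> 2 * real M / real N"
    using cos_grover_angle_sq_le[OF assms(1,2)] assms(3) unfolding x_def by simp
  then have "1 - 2 * real M / real N \<le> sin x ^ 2"
    using sin_cos_squared_add[of x] by linarith
  also have "sin x ^ 2 = real M * (2 * (sin x / sqrt (2 * real M))^2)"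
    using assms(4) by (simp add: power_divide)
  finally show ?thesis unfolding x_def .
qed

lemma grover_lambda_pair_sums_ge:
  fixes N M :: nat and \<theta> :: real
  assumes "0 < \<theta>" "\<theta> < pi / 2" "sin \<theta> = sqrt (2 * real M / real N)" "1 \<le> M"
    and "card E = M" "\<forall>z. S z \<in> {0, 1}"
  defines "lam \<equiv> grover_lambda N M \<theta> E S"
  shows "\<forall>i\<in>E. S i = S (i + 1) \<Longrightarrow>
           1 - 2 * real M / real N \<le> (\<Sum>i\<in>E. (lam i + lam (i + 1))^2 / 2)"
    and "\<forall>i\<in>E. S i \<noteq> S (i + 1) \<Longrightarrow>
           1 - 2 * real M / real N \<le> (\<Sum>i\<in>E. (lam i - lam (i + 1))^2 / 2)"
proof -
  define a where "a = sin ((2 * of_int \<lfloor>pi / (4 * \<theta>)\<rfloor> + 1) * \<theta>) / sqrt (2 * real M)"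
  have total: "1 - 2 * real M / real N \<le> (\<Sum>i\<in>E. 2 * a^2)"
    using grover_pairs_energy_ge[OF assms(1-4)] assms(5) unfolding a_def by simp
  show "1 - 2 * real M / real N \<le> (\<Sum>i\<in>E. (lam i + lam (i + 1))^2 / 2)"
    if "\<forall>i\<in>E. S i = S (i + 1)"
  proof -
    have "(\<Sum>i\<in>E. 2 * a^2) = (\<Sum>i\<in>E. (lam i + lam (i + 1))^2 / 2)"
      using grover_lambda_pair_energy(1) that assms(6) unfolding lam_def a_def
      by (intro sum.cong) auto
    with total show ?thesis by simp
  qed
  show "1 - 2 * real M / real N \<le> (\<Sum>i\<in>E. (lam i - lam (i + 1))^2 / 2)"
    if "\<forall>i\<in>E. S i \<noteq> S (i + 1)"
  proof -
    have "(\<Sum>i\<in>E. 2 * a^2) = (\<Sum>i\<in>E. (lam i - lam (i + 1))^2 / 2)"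
      using grover_lambda_pair_energy(2) that assms(6) unfolding lam_def a_def
      by (intro sum.cong) auto
    with total show ?thesis by simp
  qed
qed

theorem mainTheorem19:
  fixes n N M :: nat and E :: "nat set" and S :: "nat \<Rightarrow> nat" and \<theta> :: real
  assumes hn: "n \<ge> 1" and hN: "N = 2 ^ n"
    and hM: "M \<ge> 1" and hMN: "2 * M < N"
    and hE: "E \<subseteq> {0..<N}" and hcard: "card E = M" and heven: "\<forall>i\<in>E. even i"
    and hS: "\<forall>z. S z \<in> {0, 1}"
    and h\<theta>: "0 < \<theta>" "\<theta> < pi / 2" and hsin: "sin \<theta> = sqrt (2 * real M / real N)"
  shows "((\<forall>i\<in>E. S i = S (i + 1)) \<longrightarrow>
            (\<Sum>z<N div 2. \<bar>haar_transform n (grover_lambda N M \<theta> E S) z\<bar> ^ 2)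
              \<ge> 1 - 2 * real M / real N)
       \<and> ((\<forall>i\<in>E. S i \<noteq> S (i + 1)) \<longrightarrow>
            (\<Sum>z\<in>{N div 2..<N}. \<bar>haar_transform n (grover_lambda N M \<theta> E S) z\<bar> ^ 2)
              \<ge> 1 - 2 * real M / real N)
       \<and> ((\<forall>i\<in>E. S i = S (i + 1)) \<longrightarrow>
            (\<Sum>z<N div 2. \<bar>matvec N (haarW n 1) (grover_lambda N M \<theta> E S) z\<bar> ^ 2)
              \<ge> 1 - 2 * real M / real N)
       \<and> ((\<forall>i\<in>E. S i \<noteq> S (i + 1)) \<longrightarrow>
            (\<Sum>z\<in>{N div 2..<N}. \<bar>matvec N (haarW n 1) (grover_lambda N M \<theta> E S) z\<bar> ^ 2)
              \<ge> 1 - 2 * real M / real N)"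
proof -
  define lam where "lam = grover_lambda N M \<theta> E S"
  define u where "u = matvec N (haarW n 1) lam"
  have half: "(2::nat)^n div 2 = 2^(n-1)" using hn by (cases n) auto
  have E: "E \<subseteq> {..<2^n}" using hE hN by auto
  note pairs = grover_lambda_pair_sums_ge[OF h\<theta> hsin hM hcard hS, folded lam_def]
  note first = matvec_haarW_first_pair_energy[OF hn E heven, of lam, folded hN half u_def]
  have low: "1 - 2 * real M / real N \<le> (\<Sum>z<N div 2. u z ^ 2)"
    if "\<forall>i\<in>E. S i = S (i + 1)"
    using order_trans[OF pairs(1)[OF that] first(1)] by (simp add: hN half)
  have high: "1 - 2 * real M / real N \<le> (\<Sum>z\<in>{N div 2..<N}. u z ^ 2)"
    if "\<forall>i\<in>E. S i \<noteq> S (i + 1)"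
    using order_trans[OF pairs(2)[OF that] first(2)] by (simp add: hN half)
  have "(\<Sum>z<N div 2. haar_transform n lam z ^ 2) = (\<Sum>z<N div 2. u z ^ 2)"
    using haar_partial_low_half_energy[OF hn order_refl]
    unfolding haar_transform_def u_def hN half by simp
  moreover have "(\<Sum>z\<in>{N div 2..<N}. haar_transform n lam z ^ 2) = (\<Sum>z\<in>{N div 2..<N}. u z ^ 2)"
    using haar_partial_high_half[OF hn order_refl]
    unfolding haar_transform_def u_def hN half by (intro sum.cong) auto
  ultimately show ?thesis
    using low high unfolding lam_def[symmetric] u_def[symmetric] by simp
qed

end
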